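(* Let $H$ be a simple, co-hopfian, complete group, and let $G$ be a simple, complete group with $H\subsetneq G$ such that every proper subgroup of $G$ is either cyclic or contained in a conjugate $g^{-1}Hg$ ($g\in G$) of $H$. Then $G$ is co-hopfian and the inclusion $H\subseteq G$ is a localization.
   Context: A group homomorphism $i\colon H\to G$ is a localization if for every homomorphism $\varphi\colon H\to G$ there exists a unique homomorphism $\psi\colon G\to G$ with $\psi\circ i=\varphi$; for $H\subseteq G$, "$H\subseteq G$ is a localization" means the inclusion map is. A group is co-hopfian if every injective endomorphism is an automorphism; complete if it has trivial center and every automorphism is inner. *)

theory Defs
  imports "HOL-Algebra.Algebra"
begin

text \<open>Simple group (possibly infinite; the library locale simple_group requires
  order G > 1, which fails for infinite groups since card of an infinite set is 0).\<close>
definition simple_grp :: "('a, 'b) monoid_scheme \<Rightarrow> bool" where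
  "simple_grp G \<longleftrightarrow> group G \<and> carrier G \<noteq> {\<one>\<^bsub>G\<^esub>} \<and>
     (\<forall>N. N \<lhd> G \<longrightarrow> N = {\<one>\<^bsub>G\<^esub>} \<or> N = carrier G)"

definition co_hopfian :: "('a, 'b) monoid_scheme \<Rightarrow> bool" where
  "co_hopfian G \<longleftrightarrow> group G \<and>
     (\<forall>f \<in> hom G G. inj_on f (carrier G) \<longrightarrow> f \<in> iso G G)"

definition grp_center :: "('a, 'b) monoid_scheme \<Rightarrow> 'a set" where
  "grp_center G = {z \<in> carrier G. \<forall>x \<in> carrier G. z \<otimes>\<^bsub>G\<^esub> x = x \<otimes>\<^bsub>G\<^esub> z}"

definition complete_grp :: "('a, 'b) monoid_scheme \<Rightarrow> bool" where
  "complete_grp G \<longleftrightarrow> group G \<and> grp_center G = {\<one>\<^bsub>G\<^esub>} \<and>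
     (\<forall>f \<in> iso G G. \<exists>g \<in> carrier G. \<forall>x \<in> carrier G.
        f x = g \<otimes>\<^bsub>G\<^esub> x \<otimes>\<^bsub>G\<^esub> inv\<^bsub>G\<^esub> g)"

definition localization ::
  "('a \<Rightarrow> 'c) \<Rightarrow> ('a, 'b) monoid_scheme \<Rightarrow> ('c, 'd) monoid_scheme \<Rightarrow> bool" where
  "localization i H G \<longleftrightarrow> i \<in> hom H G \<and>
     (\<forall>\<phi> \<in> hom H G. \<exists>\<psi> \<in> hom G G. (\<forall>x \<in> carrier H. \<psi> (i x) = \<phi> x) \<and>
        (\<forall>\<psi>' \<in> hom G G. (\<forall>x \<in> carrier H. \<psi>' (i x) = \<phi> x) \<longrightarrow>
            (\<forall>y \<in> carrier G. \<psi>' y = \<psi> y)))"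

definition conj_subset :: "('a, 'b) monoid_scheme \<Rightarrow> 'a \<Rightarrow> 'a set \<Rightarrow> 'a set" where
  "conj_subset G g H = (\<lambda>h. inv\<^bsub>G\<^esub> g \<otimes>\<^bsub>G\<^esub> h \<otimes>\<^bsub>G\<^esub> g) ` H"

end

theory Submission imports Defs begin

text \<open>A simple complete group is non-abelian, so an injective image of H or of G cannot lie in a
  cyclic subgroup; if it is proper, it lies in a conjugate of H. Conjugating it back into H, the
  co-hopficity of H makes the resulting map onto H. For an injective endomorphism of G that is not
  onto, this is absurd: elements outside H would be sent into H, which is already the image of H.
  For an injective \<open>\<phi> : H \<rightarrow> G\<close>, completeness of H turns it into conjugation by some k, which
  extends to G. Uniqueness of the extension reduces to showing that an endomorphism of G fixing H
  pointwise is the identity: it is injective since G is simple, hence inner by some a since G is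
  co-hopfian and complete. Then a centralizes H, and the centralizer of a is either G or lies in a
  conjugate of H, which co-hopficity forces to be H itself; completeness of G resp. H gives a = 1.\<close>

lemma simple_grp_hom_trivial_or_inj:
  assumes "simple_grp A" "group B" "f \<in> hom A B"
  shows "(\<forall>x\<in>carrier A. f x = \<one>\<^bsub>B\<^esub>) \<or> inj_on f (carrier A)"
proof -
  interpret group_hom A B f
    using assms by (simp add: simple_grp_def group_hom_def group_hom_axioms_def)
  have "kernel A B f = {\<one>\<^bsub>A\<^esub>} \<or> kernel A B f = carrier A"
    using assms(1) normal_kernel by (simp add: simple_grp_def)
  then show ?thesis
    using inj_iff_trivial_ker by (auto simp: kernel_def)
qed

lemma simple_complete_grp_noncommutative:
  assumes "simple_grp A" "complete_grp A"
  shows "grp_center A \<noteq> carrier A"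
  using assms unfolding simple_grp_def complete_grp_def by metis

lemma inj_hom_into_cyclic_imp_commutative:
  assumes "group A" "group G" "f \<in> hom A G" "inj_on f (carrier A)"
    and "subgroup K G" "f ` carrier A \<subseteq> K" "cyclic_group (G\<lparr>carrier := K\<rparr>)"
  shows "grp_center A = carrier A"
proof -
  interpret K: comm_group "G\<lparr>carrier := K\<rparr>"
    using group.cyclic_imp_abelian_group group.subgroup_imp_group assms(2,5,7) by blast
  have "x \<otimes>\<^bsub>A\<^esub> y = y \<otimes>\<^bsub>A\<^esub> x" if "x \<in> carrier A" "y \<in> carrier A" for x y
  proof -
    have "f (x \<otimes>\<^bsub>A\<^esub> y) = f x \<otimes>\<^bsub>G\<^esub> f y" "f (y \<otimes>\<^bsub>A\<^esub> x) = f y \<otimes>\<^bsub>G\<^esub> f x"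
      using assms(3) that by (simp_all add: hom_mult)
    moreover have "f x \<otimes>\<^bsub>G\<^esub> f y = f y \<otimes>\<^bsub>G\<^esub> f x"
      using K.m_comm assms(6) that by fastforce
    ultimately show ?thesis
      using assms(1,4) that by (metis group.is_monoid inj_onD monoid.m_closed)
  qed
  then show ?thesis unfolding grp_center_def by auto
qed

context group
begin

lemma inv_m_cancel [simp]: "k \<in> carrier G \<Longrightarrow> y \<in> carrier G \<Longrightarrow> inv k \<otimes> (k \<otimes> y) = y"
  by (metis l_inv l_one inv_closed m_assoc)

lemma m_inv_cancel [simp]: "k \<in> carrier G \<Longrightarrow> y \<in> carrier G \<Longrightarrow> k \<otimes> (inv k \<otimes> y) = y"
  by (metis r_inv l_one inv_closed m_assoc)

lemma conj_hom: "k \<in> carrier G \<Longrightarrow> (\<lambda>y. k \<otimes> y \<otimes> inv k) \<in> hom G G"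
  unfolding hom_def by (auto simp: m_assoc)

lemma conj_inj: "k \<in> carrier G \<Longrightarrow> inj_on (\<lambda>y. k \<otimes> y \<otimes> inv k) (carrier G)"
  unfolding inj_on_def by auto

lemma centralizer_subgroup:
  assumes a: "a \<in> carrier G"
  shows "subgroup {x \<in> carrier G. a \<otimes> x = x \<otimes> a} G"
proof (rule subgroupI)
  fix b assume "b \<in> {x \<in> carrier G. a \<otimes> x = x \<otimes> a}"
  then have b: "b \<in> carrier G" and ab: "a \<otimes> b = b \<otimes> a" by auto
  have "inv b \<otimes> a = inv b \<otimes> (a \<otimes> b) \<otimes> inv b" using a b by (simp add: m_assoc)
  also have "\<dots> = a \<otimes> inv b" using a b by (simp add: ab m_assoc)
  finally show "inv b \<in> {x \<in> carrier G. a \<otimes> x = x \<otimes> a}" using b by simp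
next
  fix b c assume "b \<in> {x \<in> carrier G. a \<otimes> x = x \<otimes> a}" "c \<in> {x \<in> carrier G. a \<otimes> x = x \<otimes> a}"
  then have b: "b \<in> carrier G" "a \<otimes> b = b \<otimes> a" and c: "c \<in> carrier G" "a \<otimes> c = c \<otimes> a" by auto
  have "a \<otimes> (b \<otimes> c) = a \<otimes> b \<otimes> c" using a b(1) c(1) by (simp add: m_assoc)
  also have "\<dots> = b \<otimes> (a \<otimes> c)" using a b(1) c(1) by (simp add: b(2) m_assoc)
  also have "\<dots> = b \<otimes> c \<otimes> a" using a b(1) c(1) by (simp add: c(2) m_assoc)
  finally show "b \<otimes> c \<in> {x \<in> carrier G. a \<otimes> x = x \<otimes> a}" using b c by simp
qed (use a in auto)

lemma conj_mem_of_subset_conj_subset: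
  assumes "S \<subseteq> conj_subset G g H" "g \<in> carrier G" "H \<subseteq> carrier G" "x \<in> S"
  shows "g \<otimes> x \<otimes> inv g \<in> H"
proof -
  obtain h where "h \<in> H" "x = inv g \<otimes> h \<otimes> g"
    using assms(1,4) unfolding conj_subset_def by auto
  moreover have "g \<otimes> (inv g \<otimes> h \<otimes> g) \<otimes> inv g = h" if "h \<in> carrier G"
    using assms(2) that by (simp add: m_assoc)
  ultimately show ?thesis using assms(3) by auto
qed

lemma co_hopfian_subgroup_inj_endo_iso:
  assumes "subgroup H G" "co_hopfian (G\<lparr>carrier := H\<rparr>)"
    and "\<theta> \<in> hom (G\<lparr>carrier := H\<rparr>) G" "inj_on \<theta> H" "\<theta> ` H \<subseteq> H"
  shows "\<theta> \<in> iso (G\<lparr>carrier := H\<rparr>) (G\<lparr>carrier := H\<rparr>)"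
proof -
  have "\<theta> \<in> hom (G\<lparr>carrier := H\<rparr>) (G\<lparr>carrier := H\<rparr>)"
    using assms(3,5) unfolding hom_def by auto
  then show ?thesis using assms(2,4) unfolding co_hopfian_def by simp
qed

lemma co_hopfian_iso_subgroup_imp_eq:
  assumes "co_hopfian G" "subgroup H G" "\<psi> \<in> iso G (G\<lparr>carrier := H\<rparr>)"
  shows "H = carrier G"
proof -
  have "\<psi> \<in> hom G G" "bij_betw \<psi> (carrier G) H"
    using assms(3) subgroup.subset[OF assms(2)] unfolding iso_def hom_def by auto
  moreover from this have "\<psi> \<in> iso G G"
    using assms(1) unfolding co_hopfian_def bij_betw_def by blast
  ultimately show ?thesis unfolding iso_def bij_betw_def by auto
qed

lemma conj_subset_subset_if_superset:
  assumes "subgroup H G" "co_hopfian (G\<lparr>carrier := H\<rparr>)" "g \<in> carrier G"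
    and "H \<subseteq> conj_subset G g H"
  shows "conj_subset G g H \<subseteq> H"
proof
  have Hs: "H \<subseteq> carrier G" using subgroup.subset[OF assms(1)] .
  let ?\<theta> = "\<lambda>y. g \<otimes> y \<otimes> inv g"
  have "?\<theta> \<in> iso (G\<lparr>carrier := H\<rparr>) (G\<lparr>carrier := H\<rparr>)"
  proof (rule co_hopfian_subgroup_inj_endo_iso[OF assms(1,2)])
    show "?\<theta> \<in> hom (G\<lparr>carrier := H\<rparr>) G" using conj_hom[OF assms(3)] Hs unfolding hom_def by auto
    show "inj_on ?\<theta> H" using conj_inj[OF assms(3)] Hs by (rule inj_on_subset)
    show "?\<theta> ` H \<subseteq> H" using conj_mem_of_subset_conj_subset[OF assms(4,3) Hs] by auto
  qed
  then have surj: "?\<theta> ` H = H" unfolding iso_def bij_betw_def by simp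
  fix z assume "z \<in> conj_subset G g H"
  then obtain h where h: "h \<in> H" "z = inv g \<otimes> h \<otimes> g" unfolding conj_subset_def by auto
  then obtain x where "x \<in> H" "h = ?\<theta> x" using surj by blast
  moreover have "inv g \<otimes> ?\<theta> x \<otimes> g = x" if "x \<in> carrier G"
    using assms(3) that by (simp add: m_assoc)
  ultimately show "z \<in> H" using h Hs by auto
qed

end

locale subconjugate_supergroup = group G for G :: "('a, 'b) monoid_scheme" (structure) +
  fixes H :: "'a set"
  assumes H_subgroup: "subgroup H G" and H_proper: "H \<noteq> carrier G"
    and H_simple: "simple_grp (G\<lparr>carrier := H\<rparr>)"
    and H_co_hopfian: "co_hopfian (G\<lparr>carrier := H\<rparr>)"
    and H_complete: "complete_grp (G\<lparr>carrier := H\<rparr>)"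
    and G_simple: "simple_grp G" and G_complete: "complete_grp G"
    and proper_subgroup_cyclic_or_subconjugate: "\<And>K. subgroup K G \<Longrightarrow> K \<noteq> carrier G \<Longrightarrow>
      cyclic_group (G\<lparr>carrier := K\<rparr>) \<or> (\<exists>g \<in> carrier G. K \<subseteq> conj_subset G g H)"
begin

lemma H_carrier: "H \<subseteq> carrier G"
  using subgroup.subset[OF H_subgroup] .

lemma H_nontrivial: "\<exists>x\<in>H. x \<noteq> \<one>"
  using H_simple subgroup.one_closed[OF H_subgroup] unfolding simple_grp_def by auto

lemma inclusion_hom: "(\<lambda>x. x) \<in> hom (G\<lparr>carrier := H\<rparr>) G"
  using group_hom.homh[OF canonical_inj_is_hom[OF H_subgroup]] by (simp add: id_def)

lemma restrict_hom_to_H: "f \<in> hom G G \<Longrightarrow> f \<in> hom (G\<lparr>carrier := H\<rparr>) G"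
  using H_carrier unfolding hom_def by auto

lemma subconjugate_if_contains_inj_image:
  assumes "subgroup K G" "K \<noteq> carrier G" "simple_grp A" "complete_grp A"
    and "f \<in> hom A G" "inj_on f (carrier A)" "f ` carrier A \<subseteq> K"
  shows "\<exists>g\<in>carrier G. K \<subseteq> conj_subset G g H"
proof -
  have "group A" using assms(3) by (simp add: simple_grp_def)
  then have "\<not> cyclic_group (G\<lparr>carrier := K\<rparr>)"
    using inj_hom_into_cyclic_imp_commutative[OF _ is_group assms(5,6,1,7)]
      simple_complete_grp_noncommutative[OF assms(3,4)] by blast
  then show ?thesis using proper_subgroup_cyclic_or_subconjugate assms(1,2) by blast
qed

lemma proper_inj_image_subconjugate:
  assumes "simple_grp A" "complete_grp A" "f \<in> hom A G" "inj_on f (carrier A)"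
    and "f ` carrier A \<noteq> carrier G"
  shows "\<exists>g\<in>carrier G. f ` carrier A \<subseteq> conj_subset G g H"
proof -
  have "subgroup (f ` carrier A) G"
    using assms(1,3) is_group
    by (intro group_hom.img_is_subgroup) (simp add: simple_grp_def group_hom_def group_hom_axioms_def)
  then show ?thesis using subconjugate_if_contains_inj_image assms by blast
qed

lemma G_co_hopfian: "co_hopfian G"
  unfolding co_hopfian_def
proof (intro conjI is_group ballI impI)
  fix f assume f: "f \<in> hom G G" and inj: "inj_on f (carrier G)"
  show "f \<in> iso G G"
  proof (rule ccontr)
    assume "f \<notin> iso G G"
    then have "f ` carrier G \<noteq> carrier G" using f inj unfolding iso_def bij_betw_def by auto
    then obtain g where g: "g \<in> carrier G" "f ` carrier G \<subseteq> conj_subset G g H"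
      using proper_inj_image_subconjugate[OF G_simple G_complete f inj] by blast
    define \<theta> where "\<theta> = (\<lambda>y. g \<otimes> f y \<otimes> inv g)"
    have \<theta>_hom: "\<theta> \<in> hom G G"
      using Group.hom_compose[OF f conj_hom[OF g(1)]] by (simp add: \<theta>_def comp_def)
    have \<theta>_inj: "inj_on \<theta> (carrier G)"
      using inj conj_inj[OF g(1)] f unfolding \<theta>_def inj_on_def by (auto simp: hom_in_carrier)
    have \<theta>_into_H: "\<theta> y \<in> H" if "y \<in> carrier G" for y
      using conj_mem_of_subset_conj_subset[OF g(2,1) H_carrier] that by (simp add: \<theta>_def)
    have "\<theta> \<in> iso (G\<lparr>carrier := H\<rparr>) (G\<lparr>carrier := H\<rparr>)"
      using co_hopfian_subgroup_inj_endo_iso[OF H_subgroup H_co_hopfian restrict_hom_to_H[OF \<theta>_hom]]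
        inj_on_subset[OF \<theta>_inj H_carrier] \<theta>_into_H H_carrier by auto
    then have \<theta>_H: "\<theta> ` H = H" unfolding iso_def bij_betw_def by simp
    \<comment> \<open>\<theta> already maps H onto H, so an element outside H has nowhere to go.\<close>
    obtain y where y: "y \<in> carrier G" "y \<notin> H" using H_proper H_carrier by blast
    then obtain x where "x \<in> H" "\<theta> y = \<theta> x" using \<theta>_into_H \<theta>_H by (metis imageE)
    with y show False using \<theta>_inj H_carrier by (metis inj_onD subsetD)
  qed
qed

lemma centralizes_H_imp_one:
  assumes a: "a \<in> carrier G" and comm: "\<forall>x\<in>H. a \<otimes> x = x \<otimes> a"
  shows "a = \<one>"
proof -
  define C where "C = {x \<in> carrier G. a \<otimes> x = x \<otimes> a}"
  have C_subgroup: "subgroup C G" unfolding C_def using centralizer_subgroup[OF a] .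
  have H_C: "H \<subseteq> C" using comm H_carrier unfolding C_def by auto
  show ?thesis
  proof (cases "C = carrier G")
    case True
    then have "a \<in> grp_center G" using a unfolding grp_center_def C_def by auto
    then show ?thesis using G_complete unfolding complete_grp_def by auto
  next
    case False
    obtain g where g: "g \<in> carrier G" "C \<subseteq> conj_subset G g H"
      using subconjugate_if_contains_inj_image[OF C_subgroup False H_simple H_complete inclusion_hom]
        H_C by auto
    have "conj_subset G g H \<subseteq> H"
      using conj_subset_subset_if_superset[OF H_subgroup H_co_hopfian g(1)] g(2) H_C by blast
    then have "a \<in> H" using a g(2) unfolding C_def by auto
    then have "a \<in> grp_center (G\<lparr>carrier := H\<rparr>)" using comm unfolding grp_center_def by auto
    then show ?thesis using H_complete unfolding complete_grp_def by auto
  qed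
qed

lemma endo_fixing_H_is_id:
  assumes \<chi>: "\<chi> \<in> hom G G" and fix_H: "\<forall>x\<in>H. \<chi> x = x"
  shows "\<forall>y\<in>carrier G. \<chi> y = y"
proof -
  obtain x where x: "x \<in> H" "x \<noteq> \<one>" using H_nontrivial by blast
  then have "x \<in> carrier G" "\<chi> x \<noteq> \<one>" using fix_H H_carrier by auto
  then have "inj_on \<chi> (carrier G)"
    using simple_grp_hom_trivial_or_inj[OF G_simple is_group \<chi>] by blast
  then have "\<chi> \<in> iso G G" using G_co_hopfian \<chi> unfolding co_hopfian_def by auto
  then obtain a where a: "a \<in> carrier G" "\<forall>x\<in>carrier G. \<chi> x = a \<otimes> x \<otimes> inv a"
    using G_complete unfolding complete_grp_def by auto
  have "a \<otimes> x = x \<otimes> a" if "x \<in> H" for x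
  proof -
    have x: "x \<in> carrier G" using that H_carrier by auto
    then have "x \<otimes> a = a \<otimes> x \<otimes> inv a \<otimes> a" using a fix_H that by auto
    then show ?thesis using a x by (simp add: m_assoc)
  qed
  then have "a = \<one>" using centralizes_H_imp_one a(1) by blast
  then show ?thesis using a by simp
qed

lemma hom_eq_conj_if_eq_conj_on_H:
  assumes \<psi>: "\<psi> \<in> hom G G" and k: "k \<in> carrier G" and eq_H: "\<forall>x\<in>H. \<psi> x = k \<otimes> x \<otimes> inv k"
  shows "\<forall>y\<in>carrier G. \<psi> y = k \<otimes> y \<otimes> inv k"
proof
  fix y assume y: "y \<in> carrier G"
  define \<chi> where "\<chi> = (\<lambda>y. inv k \<otimes> \<psi> y \<otimes> k)"
  have "\<chi> \<in> hom G G"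
    using Group.hom_compose[OF \<psi> conj_hom[OF inv_closed[OF k]]] k by (simp add: \<chi>_def comp_def)
  moreover have "\<forall>x\<in>H. \<chi> x = x" using eq_H k H_carrier by (auto simp: \<chi>_def m_assoc)
  ultimately have "inv k \<otimes> \<psi> y \<otimes> k = y" using endo_fixing_H_is_id y by (auto simp: \<chi>_def)
  then have "k \<otimes> (inv k \<otimes> \<psi> y \<otimes> k) \<otimes> inv k = k \<otimes> y \<otimes> inv k" by simp
  then show "\<psi> y = k \<otimes> y \<otimes> inv k"
    using k y hom_in_carrier[OF \<psi> y] by (simp add: m_assoc)
qed

lemma hom_trivial_on_H_imp_trivial:
  assumes \<psi>: "\<psi> \<in> hom G G" and "\<forall>x\<in>H. \<psi> x = \<one>"
  shows "\<forall>y\<in>carrier G. \<psi> y = \<one>"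
proof -
  obtain x where x: "x \<in> H" "x \<noteq> \<one>" using H_nontrivial by blast
  moreover have "\<psi> x = \<psi> \<one>" using assms(2) x(1) subgroup.one_closed[OF H_subgroup] by simp
  ultimately have "\<not> inj_on \<psi> (carrier G)"
    using H_carrier by (auto dest: inj_onD)
  then show ?thesis using simple_grp_hom_trivial_or_inj[OF G_simple is_group \<psi>] by auto
qed

lemma inj_hom_from_H_not_onto:
  assumes \<phi>: "\<phi> \<in> hom (G\<lparr>carrier := H\<rparr>) G" and inj: "inj_on \<phi> H"
  shows "\<phi> ` H \<noteq> carrier G"
proof
  assume "\<phi> ` H = carrier G"
  then have "\<phi> \<in> iso (G\<lparr>carrier := H\<rparr>) G" using \<phi> inj unfolding iso_def bij_betw_def by auto
  then have "inv_into H \<phi> \<in> iso G (G\<lparr>carrier := H\<rparr>)"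
    using group.iso_set_sym[OF subgroup_imp_group[OF H_subgroup]] by fastforce
  then show False
    using co_hopfian_iso_subgroup_imp_eq[OF G_co_hopfian H_subgroup] H_proper by blast
qed

lemma inj_hom_from_H_is_conj:
  assumes \<phi>: "\<phi> \<in> hom (G\<lparr>carrier := H\<rparr>) G" and inj: "inj_on \<phi> H"
  shows "\<exists>k\<in>carrier G. \<forall>x\<in>H. \<phi> x = k \<otimes> x \<otimes> inv k"
proof -
  obtain g where g: "g \<in> carrier G" "\<phi> ` H \<subseteq> conj_subset G g H"
    using proper_inj_image_subconjugate[OF H_simple H_complete \<phi>] inj inj_hom_from_H_not_onto[OF \<phi> inj]
    by auto
  have \<phi>_carrier: "\<phi> x \<in> carrier G" if "x \<in> H" for x
    using \<phi> that unfolding hom_def by auto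
  define \<theta> where "\<theta> = (\<lambda>y. g \<otimes> \<phi> y \<otimes> inv g)"
  have "\<theta> \<in> iso (G\<lparr>carrier := H\<rparr>) (G\<lparr>carrier := H\<rparr>)"
  proof (rule co_hopfian_subgroup_inj_endo_iso[OF H_subgroup H_co_hopfian])
    show "\<theta> \<in> hom (G\<lparr>carrier := H\<rparr>) G"
      using Group.hom_compose[OF \<phi> conj_hom[OF g(1)]] by (simp add: \<theta>_def comp_def)
    show "inj_on \<theta> H" using inj g(1) \<phi>_carrier unfolding \<theta>_def inj_on_def by auto
    show "\<theta> ` H \<subseteq> H"
      using conj_mem_of_subset_conj_subset[OF g(2,1) H_carrier] by (auto simp: \<theta>_def)
  qed
  then obtain h where h: "h \<in> H" "\<forall>x\<in>H. \<theta> x = h \<otimes> x \<otimes> inv h"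
    using H_complete m_inv_consistent[OF H_subgroup] unfolding complete_grp_def by auto
  have "\<phi> x = (inv g \<otimes> h) \<otimes> x \<otimes> inv (inv g \<otimes> h)" if "x \<in> H" for x
  proof -
    have "\<phi> x = inv g \<otimes> \<theta> x \<otimes> g"
      using g(1) \<phi>_carrier[OF that] by (simp add: \<theta>_def m_assoc)
    moreover have "h \<in> carrier G" "x \<in> carrier G" using h(1) that H_carrier by auto
    ultimately show ?thesis
      using h(2) that g(1) by (simp add: m_assoc inv_mult_group)
  qed
  then show ?thesis using g(1) h(1) H_carrier by blast
qed

lemma inclusion_localization: "localization (\<lambda>x. x) (G\<lparr>carrier := H\<rparr>) G"
  unfolding localization_def
proof (intro conjI inclusion_hom ballI)
  fix \<phi> assume \<phi>: "\<phi> \<in> hom (G\<lparr>carrier := H\<rparr>) G"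
  consider "\<forall>x\<in>H. \<phi> x = \<one>" | "inj_on \<phi> H"
    using simple_grp_hom_trivial_or_inj[OF H_simple is_group \<phi>] by auto
  then show "\<exists>\<psi>\<in>hom G G. (\<forall>x\<in>carrier (G\<lparr>carrier := H\<rparr>). \<psi> x = \<phi> x) \<and>
      (\<forall>\<psi>'\<in>hom G G. (\<forall>x\<in>carrier (G\<lparr>carrier := H\<rparr>). \<psi>' x = \<phi> x) \<longrightarrow>
        (\<forall>y\<in>carrier G. \<psi>' y = \<psi> y))"
  proof cases
    case 1
    have "(\<lambda>_. \<one>) \<in> hom G G" unfolding hom_def by auto
    then show ?thesis using 1 hom_trivial_on_H_imp_trivial by (intro bexI[of _ "\<lambda>_. \<one>"]) auto
  next
    case 2
    then obtain k where "k \<in> carrier G" "\<forall>x\<in>H. \<phi> x = k \<otimes> x \<otimes> inv k"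
      using inj_hom_from_H_is_conj[OF \<phi>] by blast
    then show ?thesis
      using conj_hom hom_eq_conj_if_eq_conj_on_H by (intro bexI[of _ "\<lambda>y. k \<otimes> y \<otimes> inv k"]) auto
  qed
qed

end

theorem theorem5p4:
  fixes G :: "('a, 'b) monoid_scheme" and H :: "'a set"
  assumes "subgroup H G" and "H \<noteq> carrier G"
    and "simple_grp (G\<lparr>carrier := H\<rparr>)"
    and "co_hopfian (G\<lparr>carrier := H\<rparr>)"
    and "complete_grp (G\<lparr>carrier := H\<rparr>)"
    and "simple_grp G" and "complete_grp G"
    and "\<forall>K. subgroup K G \<and> K \<noteq> carrier G \<longrightarrow>
           cyclic_group (G\<lparr>carrier := K\<rparr>) \<or> (\<exists>g \<in> carrier G. K \<subseteq> conj_subset G g H)"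
  shows "co_hopfian G \<and> localization (\<lambda>x. x) (G\<lparr>carrier := H\<rparr>) G"
proof -
  have "group G" using assms(6) by (simp add: simple_grp_def)
  then interpret subconjugate_supergroup G H
    using assms by (simp add: subconjugate_supergroup_def subconjugate_supergroup_axioms_def)
  show ?thesis using G_co_hopfian inclusion_localization by blast
qed

end
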